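(* Let $A$ be a nonzero commutative nilpotent $\mathbb{F}_p$-algebra of finite dimension with $A^e\ne0$, $A^{e+1}=0$. For $1\le r\le e$ let $t_r=\dim_{\mathbb{F}_p}(N_r/N_{r-1})$. Then the number $i(A)$ of ideals of $A$ satisfies \[ i(A)\ge \lambda(A):=s(t_1)+\sum_{r=2}^{e}\bigl(s(t_r)-1\bigr), \] where $s(m)$ denotes the number of subspaces of an $m$-dimensional $\mathbb{F}_p$-vector space.
   Context: Algebras are commutative, associative, not necessarily unital. $N_k=\{a\in A: x_1\cdots x_k a=0\ \forall x_1,\dots,x_k\in A\}$, $N_0=0$, so $0\subset N_1\subset\cdots\subset N_e=A$. *)

theory Defs
  imports Complex_Main "HOL-Computational_Algebra.Primes"
begin

(* A commutative associative (not necessarily unital) algebra over a field 'k is modelled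
   as a type 'a :: comm_ring together with a scalar multiplication sc making 'a a
   'k-vector space, compatible with the multiplication. *)

definition is_algebra :: "('k::field \<Rightarrow> 'a::comm_ring \<Rightarrow> 'a) \<Rightarrow> bool" where
  "is_algebra sc \<longleftrightarrow> vector_space sc \<and> (\<forall>c x y. sc c (x * y) = x * sc c y)"

definition alg_ideal :: "('k::field \<Rightarrow> 'a::comm_ring \<Rightarrow> 'a) \<Rightarrow> 'a set \<Rightarrow> bool" where
  "alg_ideal sc I \<longleftrightarrow> module.subspace sc I \<and> (\<forall>a\<in>I. \<forall>x. x * a \<in> I)"

(* N_k = {a. x_1 ... x_k a = 0 for all x_i}, N_0 = 0 *)
fun annN :: "nat \<Rightarrow> 'a::comm_ring set" where
  "annN 0 = {0}"
| "annN (Suc k) = {a. \<forall>x. x * a \<in> annN k}"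

(* powers A^k (k \<ge> 1): A^1 = A, A^(k+1) = span of products x*y with y \<in> A^k;
   the value at 0 is a convention and is never used *)
fun alg_pow :: "('k::field \<Rightarrow> 'a::comm_ring \<Rightarrow> 'a) \<Rightarrow> nat \<Rightarrow> 'a set" where
  "alg_pow sc 0 = UNIV"
| "alg_pow sc (Suc 0) = UNIV"
| "alg_pow sc (Suc (Suc k)) = module.span sc {x * y | x y. y \<in> alg_pow sc (Suc k)}"

definition num_subspaces :: "'k::field itself \<Rightarrow> nat \<Rightarrow> nat" where
  "num_subspaces _ m = card {W :: (nat \<Rightarrow> 'k) set.
      W \<subseteq> {v. \<forall>i\<ge>m. v i = 0} \<and> (\<lambda>i. 0) \<in> W \<and>
      (\<forall>v\<in>W. \<forall>w\<in>W. (\<lambda>i. v i + w i) \<in> W) \<and>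
      (\<forall>c. \<forall>v\<in>W. (\<lambda>i. c * v i) \<in> W)}"

end

theory Submission
  imports Defs "HOL-Library.FuncSet"
begin

text \<open>The subspaces W with N_(r-1) \<subseteq> W \<subseteq> N_r are ideals, since A N_r \<subseteq> N_(r-1) \<subseteq> W, and they
  correspond to the subspaces of N_r/N_(r-1), of which there are s(t_r). Distinct layers can only
  share the ideal N_(r-1) at their common boundary, so counting the layers r = 1, ..., e together
  loses at most one ideal per layer r \<ge> 2.\<close>

lemma finite_span_finite_scalars:
  fixes scale :: "'a::{field,finite} \<Rightarrow> 'b::ab_group_add \<Rightarrow> 'b"
  assumes "vector_space scale" and "finite B"
  shows "finite (module.span scale B)"
proof -
  interpret vector_space scale by (fact assms(1))
  define comb where "comb u = (\<Sum>v\<in>B. scale (u v) v)" for u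
  have "span B \<subseteq> comb ` (B \<rightarrow>\<^sub>E UNIV)"
  proof
    fix x assume "x \<in> span B"
    then obtain u where "x = comb u" using span_finite[OF assms(2)] unfolding comb_def by auto
    also have "comb u = comb (restrict u B)" unfolding comb_def by (intro sum.cong) auto
    finally show "x \<in> comb ` (B \<rightarrow>\<^sub>E UNIV)" by simp
  qed
  then show ?thesis by (rule finite_subset) (simp add: assms(2) finite_PiE)
qed

context vector_space
begin

lemma representation_sum_basis:
  fixes m :: nat
  assumes B: "independent B" and g: "inj_on g {..<m}" "g ` {..<m} \<subseteq> B" and j: "j < m"
  shows "representation B (\<Sum>i<m. w i *s g i) (g j) = w j"
proof -
  have "w i *s g i \<in> span B" if "i \<in> {..<m}" for i
    using g that by (auto intro: span_scale span_base)
  then have "representation B (\<Sum>i<m. w i *s g i) (g j) = (\<Sum>i<m. representation B (w i *s g i) (g j))"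
    using representation_sum[OF B, of "{..<m}"] by simp
  also have "\<dots> = (\<Sum>i<m. if i = j then w i else 0)"
    using g j by (intro sum.cong)
      (auto simp: representation_scale[OF B] span_base representation_basis[OF B] inj_on_def
        image_subset_iff)
  also have "\<dots> = w j" using j by simp
  finally show ?thesis .
qed

lemma coordinates_modulo_subspace:
  assumes U: "subspace U" and UV: "U \<subseteq> V" and fV: "finite V"
  obtains g where "\<And>i. i < dim V - dim U \<Longrightarrow> g i \<in> V"
    and "\<And>w. \<forall>i\<ge>dim V - dim U. w i = 0 \<Longrightarrow> (\<Sum>i<dim V - dim U. w i *s g i) \<in> U \<Longrightarrow> w = (\<lambda>i. 0)"
proof -
  obtain bU where bU: "bU \<subseteq> U" "independent bU" "U \<subseteq> span bU" "card bU = dim U"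
    by (rule basis_exists)
  obtain B where B: "bU \<subseteq> B" "B \<subseteq> V" "independent B" "V \<subseteq> span B"
    using maximal_independent_subset_extend[of bU V] bU UV by blast
  define m where "m = dim V - dim U"
  have fB: "finite B" using fV B(2) finite_subset by blast
  have "card (B - bU) = m"
    using card_Diff_subset[OF finite_subset[OF B(1) fB] B(1)] basis_card_eq_dim[OF B(2,4,3)] bU(4)
    unfolding m_def by simp
  then obtain g where g: "bij_betw g {..<m} (B - bU)"
    using ex_bij_betw_nat_finite[of "B - bU"] fB by (auto simp: atLeast0LessThan)
  have gB: "g i \<in> B" and gbU: "g i \<notin> bU" if "i < m" for i
    using g that unfolding bij_betw_def by auto
  have "w = (\<lambda>i. 0)" if supp: "\<forall>i\<ge>m. w i = 0" and inU: "(\<Sum>i<m. w i *s g i) \<in> U" for w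
  proof
    fix j
    show "w j = 0"
    proof (cases "j < m")
      case True
      let ?x = "\<Sum>i<m. w i *s g i"
      \<comment> \<open>The g j-coordinate of the sum in the basis B is w j, but it vanishes as the sum lies in span bU.\<close>
      have "representation B ?x (g j) = w j"
        using g gB True by (intro representation_sum_basis[OF B(3)]) (auto simp: bij_betw_def)
      moreover have "representation B ?x = representation bU ?x"
        using representation_extend[OF B(3) _ B(1)] inU bU(3) by blast
      moreover have "representation bU ?x (g j) = 0"
        using representation_ne_zero gbU True by blast
      ultimately show ?thesis by simp
    qed (use supp in simp)
  qed
  then show thesis using that gB B(2) unfolding m_def by blast
qed

lemma subspace_image_lincomb:
  assumes "(\<lambda>i. 0) \<in> W" and "\<forall>v\<in>W. \<forall>w\<in>W. (\<lambda>i. v i + w i) \<in> W"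
    and "\<forall>c. \<forall>v\<in>W. (\<lambda>i. c * v i) \<in> W"
  shows "subspace ((\<lambda>w. \<Sum>i\<in>I. w i *s g i) ` W)"
  unfolding subspace_def
proof (intro conjI ballI allI)
  show "0 \<in> (\<lambda>w. \<Sum>i\<in>I. w i *s g i) ` W"
    using assms(1) by (force intro: image_eqI[where x = "\<lambda>i. 0"])
next
  fix x y assume "x \<in> (\<lambda>w. \<Sum>i\<in>I. w i *s g i) ` W" "y \<in> (\<lambda>w. \<Sum>i\<in>I. w i *s g i) ` W"
  then obtain v w where "v \<in> W" "w \<in> W" "x = (\<Sum>i\<in>I. v i *s g i)" "y = (\<Sum>i\<in>I. w i *s g i)"
    by blast
  then show "x + y \<in> (\<lambda>w. \<Sum>i\<in>I. w i *s g i) ` W"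
    using assms(2) by (intro image_eqI[where x = "\<lambda>i. v i + w i"])
      (simp_all add: scale_left_distrib sum.distrib)
next
  fix c x assume "x \<in> (\<lambda>w. \<Sum>i\<in>I. w i *s g i) ` W"
  then obtain v where "v \<in> W" "x = (\<Sum>i\<in>I. v i *s g i)" by blast
  then show "c *s x \<in> (\<lambda>w. \<Sum>i\<in>I. w i *s g i) ` W"
    using assms(3) by (intro image_eqI[where x = "\<lambda>i. c * v i"]) (simp_all add: scale_sum_right)
qed

lemma num_subspaces_le_card_subspaces_between:
  assumes U: "subspace U" and V: "subspace V" and UV: "U \<subseteq> V" and fV: "finite V"
  shows "num_subspaces TYPE('a) (dim V - dim U) \<le> card {W. subspace W \<and> U \<subseteq> W \<and> W \<subseteq> V}"
proof -
  define m where "m = dim V - dim U"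
  obtain g where gV: "\<And>i. i < m \<Longrightarrow> g i \<in> V"
    and g_indep: "\<And>w. \<forall>i\<ge>m. w i = 0 \<Longrightarrow> (\<Sum>i<m. w i *s g i) \<in> U \<Longrightarrow> w = (\<lambda>i. 0)"
    using coordinates_modulo_subspace[OF U UV fV, folded m_def] by blast
  define L where "L w = (\<Sum>i<m. w i *s g i)" for w
  define S where "S = {W :: (nat \<Rightarrow> 'a) set.
      W \<subseteq> {v. \<forall>i\<ge>m. v i = 0} \<and> (\<lambda>i. 0) \<in> W \<and>
      (\<forall>v\<in>W. \<forall>w\<in>W. (\<lambda>i. v i + w i) \<in> W) \<and> (\<forall>c. \<forall>v\<in>W. (\<lambda>i. c * v i) \<in> W)}"
  define T where "T = {W. subspace W \<and> U \<subseteq> W \<and> W \<subseteq> V}"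
  define lift where "lift W = {u + v | u v. u \<in> U \<and> v \<in> L ` W}" for W
  define coords where "coords X = {w. (\<forall>i\<ge>m. w i = 0) \<and> L w \<in> X}" for X
  have lift_T: "lift W \<in> T" if "W \<in> S" for W
  proof -
    have "subspace (L ` W)"
      using that unfolding S_def L_def by (intro subspace_image_lincomb) auto
    then have "subspace (lift W)" and "U \<subseteq> lift W"
      unfolding lift_def using subspace_sums[OF U] subspace_0 by force+
    moreover have "L w \<in> V" for w
      unfolding L_def using gV by (intro subspace_sum[OF V] subspace_scale[OF V]) auto
    then have "lift W \<subseteq> V" unfolding lift_def using UV subspace_add[OF V] by blast
    ultimately show ?thesis unfolding T_def by blast
  qed
  have coords_lift: "coords (lift W) = W" if "W \<in> S" for W
  proof
    show "W \<subseteq> coords (lift W)"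
      using that subspace_0[OF U] unfolding S_def coords_def lift_def by force
  next
    show "coords (lift W) \<subseteq> W"
    proof
      fix w assume "w \<in> coords (lift W)"
      then obtain u w' where w: "\<forall>i\<ge>m. w i = 0" and uw': "L w = u + L w'" "u \<in> U" "w' \<in> W"
        unfolding coords_def lift_def by blast
      have "\<forall>i\<ge>m. w' i = 0" using that uw'(3) unfolding S_def by blast
      moreover have "L (\<lambda>i. w i - w' i) = u"
        using uw'(1) by (simp add: L_def scale_left_diff_distrib sum_subtractf)
      ultimately have "(\<lambda>i. w i - w' i) = (\<lambda>i. 0)"
        using w uw'(2) g_indep[unfolded L_def[symmetric]] by simp
      then have "w = w'" by (simp add: fun_eq_iff)
      then show "w \<in> W" using uw'(3) by simp
    qed
  qed
  have "finite T" unfolding T_def using fV by (auto intro: finite_subset[of _ "Pow V"])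
  moreover have "inj_on lift S" by (rule inj_on_inverseI[of _ coords]) (use coords_lift in blast)
  ultimately have "card S \<le> card T" using card_inj_on_le lift_T by blast
  then show ?thesis unfolding num_subspaces_def S_def T_def m_def .
qed

end

lemma card_layers_of_chain:
  fixes N :: "nat \<Rightarrow> 'a set" and F :: "'a set set"
  assumes "mono N" and "finite F"
  shows "int (card {W\<in>F. N 0 \<subseteq> W \<and> W \<subseteq> N 1})
         + (\<Sum>r = 2..e. int (card {W\<in>F. N (r - 1) \<subseteq> W \<and> W \<subseteq> N r}) - 1) \<le> int (card F)"
proof -
  define I where "I r = {W\<in>F. N (r - 1) \<subseteq> W \<and> W \<subseteq> N r}" for r
  have finite_I: "finite (I r)" for r using assms(2) unfolding I_def by simp
  have layers: "int (card (I 1)) + (\<Sum>r = 2..n. int (card (I r)) - 1) \<le> int (card (\<Union>r\<in>{1..n}. I r))"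
    if "1 \<le> n" for n
    using that
  proof (induction rule: dec_induct)
    case base
    then show ?case by simp
  next
    case (step n)
    let ?J = "\<Union>r\<in>{1..n}. I r"
    \<comment> \<open>Earlier layers lie below N n and the new one above it, so they share at most N n.\<close>
    have "W \<subseteq> N n" if "W \<in> ?J" for W
      using that monoD[OF assms(1)] unfolding I_def by fastforce
    moreover have "N n \<subseteq> W" if "W \<in> I (Suc n)" for W
      using that unfolding I_def by simp
    ultimately have "?J \<inter> I (Suc n) \<subseteq> {N n}" by blast
    then have "card (?J \<inter> I (Suc n)) \<le> 1"
      using card_mono[of "{N n}"] by simp
    moreover have "card ?J + card (I (Suc n)) = card (?J \<union> I (Suc n)) + card (?J \<inter> I (Suc n))"
      using finite_I by (intro card_Un_Int) auto
    moreover have "{2..Suc n} = insert (Suc n) {2..n}"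
      using step.hyps by auto
    moreover have "(\<Union>r\<in>{1..Suc n}. I r) = ?J \<union> I (Suc n)"
      by (simp add: atLeastAtMostSuc_conv Un_commute)
    ultimately show ?case using step.IH step.hyps by simp
  qed
  have "int (card (I 1)) + (\<Sum>r = 2..e. int (card (I r)) - 1) \<le> int (card F)"
  proof (cases "e = 0")
    case True
    then show ?thesis using card_mono[OF assms(2)] unfolding I_def by simp
  next
    case False
    have "card (\<Union>r\<in>{1..e}. I r) \<le> card F"
      using assms(2) unfolding I_def by (auto intro: card_mono)
    then show ?thesis using layers[of e] False by simp
  qed
  then show ?thesis by (simp add: I_def)
qed

lemma mono_annN: "mono (annN :: nat \<Rightarrow> 'a::comm_ring set)"
proof -
  have "annN k \<subseteq> (annN (Suc k) :: 'a set)" for k by (induction k) auto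
  then show ?thesis by (simp add: mono_iff_le_Suc)
qed

context
  fixes sc :: "'k::field \<Rightarrow> 'a::comm_ring \<Rightarrow> 'a"
  assumes algebra: "is_algebra sc"
begin

interpretation vector_space sc using algebra unfolding is_algebra_def by blast

lemma subspace_annN: "subspace (annN k)"
proof (induction k)
  case 0
  then show ?case by (simp add: subspace_def)
next
  case (Suc k)
  have "x * sc c y = sc c (x * y)" for c x y using algebra unfolding is_algebra_def by simp
  then show ?case
    using subspace_0[OF Suc] subspace_add[OF Suc] subspace_scale[OF Suc]
    by (auto simp: subspace_def distrib_left)
qed

lemma num_subspaces_le_card_ideals_between_annN:
  assumes "finite (UNIV :: 'a set)"
  shows "num_subspaces TYPE('k) (dim (annN (Suc k)) - dim (annN k))
    \<le> card {I. alg_ideal sc I \<and> annN k \<subseteq> I \<and> I \<subseteq> annN (Suc k)}"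
proof -
  have "{I. alg_ideal sc I \<and> annN k \<subseteq> I \<and> I \<subseteq> annN (Suc k)}
      = {W. subspace W \<and> annN k \<subseteq> W \<and> W \<subseteq> annN (Suc k)}"
    unfolding alg_ideal_def by auto
  moreover have "annN k \<subseteq> annN (Suc k)" by (rule monoD[OF mono_annN]) simp
  ultimately show ?thesis
    using num_subspaces_le_card_subspaces_between[OF subspace_annN subspace_annN _
        finite_subset[OF subset_UNIV assms]]
    by (simp del: annN.simps)
qed

end

theorem proposition3p1:
  fixes sc :: "'k::{field,finite} \<Rightarrow> 'a::comm_ring \<Rightarrow> 'a"
    and p e :: nat
  assumes "prime p" and "card (UNIV :: 'k set) = p"
    and "is_algebra sc"
    and "\<exists>B. finite B \<and> module.span sc B = UNIV"
    and "\<exists>x::'a. x \<noteq> 0"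
    and "e \<ge> 1"
    and "alg_pow sc e \<noteq> {0}" and "alg_pow sc (e + 1) = {0}"
  shows "int (num_subspaces TYPE('k) (vector_space.dim sc (annN 1 :: 'a set)
              - vector_space.dim sc (annN 0 :: 'a set)))
         + (\<Sum>r = 2..e. int (num_subspaces TYPE('k) (vector_space.dim sc (annN r :: 'a set)
              - vector_space.dim sc (annN (r - 1) :: 'a set))) - 1)
         \<le> int (card {I. alg_ideal sc I})"
proof -
  have finite_A: "finite (UNIV :: 'a set)"
    using assms(3,4) finite_span_finite_scalars unfolding is_algebra_def by metis
  define s where "s r = num_subspaces TYPE('k)
    (vector_space.dim sc (annN r :: 'a set) - vector_space.dim sc (annN (r - 1) :: 'a set))" for r
  define layer where "layer r = {I. alg_ideal sc I \<and> annN (r - 1) \<subseteq> I \<and> I \<subseteq> (annN r :: 'a set)}" for r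
  have s_layer: "s r \<le> card (layer r)" if "r \<ge> 1" for r
    using num_subspaces_le_card_ideals_between_annN[OF assms(3) finite_A, of "r - 1"] that
    unfolding s_def layer_def by (simp del: annN.simps)
  have "finite {I :: 'a set. alg_ideal sc I}"
    using finite_A by (auto intro: finite_subset[of _ "Pow UNIV"])
  from card_layers_of_chain[OF mono_annN this, of e]
  have "int (card (layer 1)) + (\<Sum>r = 2..e. int (card (layer r)) - 1) \<le> int (card {I. alg_ideal sc I})"
    by (simp add: layer_def del: annN.simps)
  moreover have "(\<Sum>r = 2..e. int (s r) - 1) \<le> (\<Sum>r = 2..e. int (card (layer r)) - 1)"
    by (intro sum_mono diff_right_mono of_nat_mono s_layer) simp
  ultimately show ?thesis using s_layer[of 1] unfolding s_def by (simp del: annN.simps)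
qed

end
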